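(* Let $N\ge 2$ be an integer. For nonnegative reals $h_1,\dots,h_N,g_1,\dots,g_N$ define (logarithms base $2$, $[x]^+=\max\{x,0\}$, $\Omega^c=\{1,\dots,N\}\setminus\Omega$) $$\overline C:=\min_{\Omega\subseteq\{1,\dots,N\}}\Big\{\log\Big(1+\big(\textstyle\sum_{i\in\Omega}g_i\big)^2\Big)+\log\Big(1+\sum_{j\in\Omega^c}h_j^2\Big)\Big\},$$ and for $\Delta>0$ $$R_{\mathrm{QMF}}(\Delta):=\min_{\Omega\subseteq\{1,\dots,N\}}\Big[\log\Big(1+\sum_{i\in\Omega}g_i^2\Big)+\log\Big(1+\sum_{j\in\Omega^c}\frac{h_j^2}{1+\Delta}\Big)-|\Omega|\log\frac{1+\Delta}{\Delta}\Big]^+.$$ Let $$\mathrm{gap}^*(\Delta;N):=\max\Big\{\log N+N\log\frac{1+\Delta}{\Delta},\ \log(N-1)+(N-1)\log\frac{1+\Delta}{\Delta}+\log(1+\Delta)\Big\}.$$ Then: (i) for every $\Delta>0$ and all nonnegative $h_i,g_i$, $\overline C-R_{\mathrm{QMF}}(\Delta)\le\mathrm{gap}^*(\Delta;N)$; (ii) $\min_{\Delta>0}\mathrm{gap}^*(\Delta;N)$ is attained at $\Delta_{\mathrm{opt}}=\frac{N}{N-1}$ if $N=2$ and at $\Delta_{\mathrm{opt}}=N-1$ if $N>2$, and the minimum value is $$\mathrm{gap}^*(N)=\begin{cases}2\log 3-1,& N=2,\\ N\log\frac{N}{N-1}+2\log(N-1),& N>2;\end{cases}$$ in particular, with the channel-independent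 choice $\Delta=\Delta_{\mathrm{opt}}$ at all relays, $\overline C-R_{\mathrm{QMF}}(\Delta_{\mathrm{opt}})\le\mathrm{gap}^*(N)=\Theta(\log N)$.
   Context: The setting is the full-duplex Gaussian $N$-relay diamond network: a source transmits $X$ with $\mathbb E|X|^2\le1$; relay $i$ receives $Y_i=\mathsf h_iX+Z_i$ and transmits $X_i$ with $\mathbb E|X_i|^2\le 1$; the destination receives $Y=\sum_i\mathsf g_iX_i+Z$, with i.i.d. $\mathcal{CN}(0,1)$ noises, and $h_i=|\mathsf h_i|$, $g_i=|\mathsf g_i|$. $\overline C$ is the cutset upper bound on capacity, and $R_{\mathrm{QMF}}(\Delta)$ is the quantize-map-and-forward achievable rate when every relay uses a Gaussian vector quantizer $\hat Y_i=Y_i+\hat Z_i$, $\hat Z_i\sim\mathcal{CN}(0,\Delta)$. *)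

theory Defs
  imports Complex_Main "HOL-Library.Landau_Symbols"
begin

definition pos_part :: "real \<Rightarrow> real" where
  "pos_part x = max x 0"

definition Cbar :: "nat \<Rightarrow> (nat \<Rightarrow> real) \<Rightarrow> (nat \<Rightarrow> real) \<Rightarrow> real" where
  "Cbar N h g = Min ((\<lambda>\<Omega>. log 2 (1 + (\<Sum>i\<in>\<Omega>. g i)^2)
        + log 2 (1 + (\<Sum>j\<in>{1..N} - \<Omega>. (h j)^2))) ` Pow {1..N})"

definition RQMF :: "nat \<Rightarrow> (nat \<Rightarrow> real) \<Rightarrow> (nat \<Rightarrow> real) \<Rightarrow> real \<Rightarrow> real" where
  "RQMF N h g \<Delta> = Min ((\<lambda>\<Omega>. pos_part (log 2 (1 + (\<Sum>i\<in>\<Omega>. (g i)^2))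
        + log 2 (1 + (\<Sum>j\<in>{1..N} - \<Omega>. (h j)^2 / (1 + \<Delta>)))
        - real (card \<Omega>) * log 2 ((1 + \<Delta>) / \<Delta>))) ` Pow {1..N})"

definition gapstar :: "real \<Rightarrow> nat \<Rightarrow> real" where
  "gapstar \<Delta> N = max (log 2 (real N) + real N * log 2 ((1 + \<Delta>) / \<Delta>))
      (log 2 (real N - 1) + (real N - 1) * log 2 ((1 + \<Delta>) / \<Delta>) + log 2 (1 + \<Delta>))"

definition Delta_opt :: "nat \<Rightarrow> real" where
  "Delta_opt N = (if N = 2 then real N / (real N - 1) else real N - 1)"

definition gapstar_opt :: "nat \<Rightarrow> real" where
  "gapstar_opt N = (if N = 2 then 2 * log 2 3 - 1
      else real N * log 2 (real N / (real N - 1)) + 2 * log 2 (real N - 1))"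

end

(*
  Fix the cut \<Omega> that attains RQMF and let k = |\<Omega>|. Against the cut-set term of the same \<Omega>,
  the QMF term loses at most log k on the relay-destination side (Cauchy-Schwarz,
  (\<Sum>g)\<^sup>2 \<le> k \<Sum>g\<^sup>2), at most log (1 + \<Delta>) on the source-relay side (quantization noise, absent
  when k = N), and the penalty k log ((1 + \<Delta>) / \<Delta>); the cases k = N and k < N are the two
  branches of gapstar. The second branch equals log (N - 1) + N log (1 + \<Delta>) - (N - 1) log \<Delta>,
  which concavity of log minimizes at \<Delta> = N - 1, where for N \<ge> 3 it dominates the first
  branch. For N = 2 the decreasing first branch and the eventually increasing second one
  cross at \<Delta> = 2.
*)

theory Submission
  imports Defs "HOL-Analysis.Convex" "HOL-Real_Asymp.Real_Asymp"
begin

lemma log_one_plus_le_shift: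
  fixes b D H :: real
  assumes "b > 1" "D \<ge> 0" "H \<ge> 0"
  shows "log b (1 + H) \<le> log b (1 + D) + log b (1 + H / (1 + D))"
proof -
  have "1 + H / (1 + D) > 0"
    using assms by (simp add: add_pos_nonneg)
  then have "log b (1 + D) + log b (1 + H / (1 + D)) = log b ((1 + D) * (1 + H / (1 + D)))"
    using assms by (simp add: log_mult)
  also have "(1 + D) * (1 + H / (1 + D)) = 1 + D + H"
    using assms by (simp add: field_simps)
  finally show ?thesis
    using assms by simp
qed

lemma log_one_plus_le_log_factor:
  fixes b c S T :: real
  assumes "b > 1" "c \<ge> 1" "S \<ge> 0" "T \<ge> 0" "S \<le> c * T"
  shows "log b (1 + S) \<le> log b c + log b (1 + T)"
proof -
  have "1 + S \<le> c * (1 + T)"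
    using assms by (simp add: algebra_simps)
  then have "log b (1 + S) \<le> log b (c * (1 + T))"
    using assms by simp
  also have "\<dots> = log b c + log b (1 + T)"
    using assms by (simp add: log_mult)
  finally show ?thesis .
qed

lemma Min_image_diff_le:
  fixes f g :: "'a \<Rightarrow> 'b::linordered_ab_group_add"
  assumes "finite A" "A \<noteq> {}" "\<And>x. x \<in> A \<Longrightarrow> f x - g x \<le> c"
  shows "Min (f ` A) - Min (g ` A) \<le> c"
proof -
  have "Min (g ` A) \<in> g ` A"
    using assms by (intro Min_in) auto
  then obtain x where x: "x \<in> A" "Min (g ` A) = g x"
    by auto
  have "Min (f ` A) \<le> f x"
    using assms x by simp
  then have "Min (f ` A) - Min (g ` A) \<le> f x - g x"
    using x(2) by (simp add: diff_right_mono)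
  then show ?thesis
    using assms(3)[OF x(1)] by order
qed

definition cutset_value :: "nat \<Rightarrow> (nat \<Rightarrow> real) \<Rightarrow> (nat \<Rightarrow> real) \<Rightarrow> nat set \<Rightarrow> real" where
  "cutset_value N h g \<Omega> = log 2 (1 + (\<Sum>i\<in>\<Omega>. g i)^2)
      + log 2 (1 + (\<Sum>j\<in>{1..N} - \<Omega>. (h j)^2))"

definition qmf_value :: "nat \<Rightarrow> (nat \<Rightarrow> real) \<Rightarrow> (nat \<Rightarrow> real) \<Rightarrow> real \<Rightarrow> nat set \<Rightarrow> real" where
  "qmf_value N h g \<Delta> \<Omega> = log 2 (1 + (\<Sum>i\<in>\<Omega>. (g i)^2))
      + log 2 (1 + (\<Sum>j\<in>{1..N} - \<Omega>. (h j)^2 / (1 + \<Delta>)))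
      - real (card \<Omega>) * log 2 ((1 + \<Delta>) / \<Delta>)"

lemma Cbar_eq_Min_cutset_value: "Cbar N h g = Min (cutset_value N h g ` Pow {1..N})"
  by (simp add: Cbar_def cutset_value_def)

lemma RQMF_eq_Min_qmf_value:
  "RQMF N h g \<Delta> = Min ((\<lambda>\<Omega>. pos_part (qmf_value N h g \<Delta> \<Omega>)) ` Pow {1..N})"
  by (simp add: RQMF_def qmf_value_def)

lemma cutset_value_minus_qmf_value_le_gapstar:
  assumes N: "N \<ge> 2" and \<Delta>: "\<Delta> > 0" and \<Omega>: "\<Omega> \<subseteq> {1..N}"
  shows "cutset_value N h g \<Omega> - qmf_value N h g \<Delta> \<Omega> \<le> gapstar \<Delta> N"
proof -
  define k where "k = card \<Omega>"
  define S1 where "S1 = (\<Sum>i\<in>\<Omega>. g i)^2"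
  define S2 where "S2 = (\<Sum>i\<in>\<Omega>. (g i)^2)"
  define H where "H = (\<Sum>j\<in>{1..N} - \<Omega>. (h j)^2)"
  define a where "a = log 2 ((1 + \<Delta>) / \<Delta>)"
  have a: "a > 0"
    using \<Delta> by (simp add: a_def)
  have k: "k \<le> N"
    using card_mono[OF _ \<Omega>] by (simp add: k_def)
  have S: "S1 \<ge> 0" "S2 \<ge> 0" "H \<ge> 0"
    by (simp_all add: S1_def S2_def H_def sum_nonneg)
  have CS: "S1 \<le> real k * S2"
    using Cauchy_Schwarz_ineq_sum[of g "\<lambda>_. 1" \<Omega>] by (simp add: S1_def S2_def k_def mult.commute)
  have diff: "cutset_value N h g \<Omega> - qmf_value N h g \<Delta> \<Omega>
      = (log 2 (1 + S1) - log 2 (1 + S2)) + (log 2 (1 + H) - log 2 (1 + H / (1 + \<Delta>))) + k * a"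
    by (simp add: cutset_value_def qmf_value_def S1_def S2_def H_def a_def k_def
        sum_divide_distrib[symmetric])
  have dest: "log 2 (1 + S1) - log 2 (1 + S2) \<le> log 2 k" if "k \<ge> 1"
    using log_one_plus_le_log_factor[of 2 k S1 S2] that S CS by simp
  have src: "log 2 (1 + H) - log 2 (1 + H / (1 + \<Delta>)) \<le> log 2 (1 + \<Delta>)"
    using log_one_plus_le_shift[of 2 \<Delta> H] \<Delta> S by simp
  have branch1: "log 2 N + N * a \<le> gapstar \<Delta> N"
    by (simp add: gapstar_def a_def)
  have branch2: "log 2 (real N - 1) + (real N - 1) * a + log 2 (1 + \<Delta>) \<le> gapstar \<Delta> N"
    by (simp add: gapstar_def a_def)
  consider "k = 0" | "k = N" | "1 \<le> k" "k \<le> N - 1"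
    using k by linarith
  then show ?thesis
  proof cases
    case 1
    then have "log 2 (1 + S1) = 0" "real k * a = 0"
      using CS S by simp_all
    moreover have "0 \<le> log 2 (1 + S2)" "0 \<le> log 2 (real N - 1) + (real N - 1) * a"
      using N a S by simp_all
    ultimately show ?thesis
      using 1 diff src branch2 by linarith
  next
    case 2
    then have "\<Omega> = {1..N}"
      using card_subset_eq[OF _ \<Omega>] by (simp add: k_def)
    then have "H = 0"
      by (simp add: H_def)
    then show ?thesis
      using 2 N diff dest branch1 by simp
  next
    case 3
    then have "real k \<le> real N - 1"
      by linarith
    then have "log 2 k \<le> log 2 (real N - 1)" "k * a \<le> (real N - 1) * a"
      using 3 a by (simp_all add: mult_right_mono)
    then show ?thesis
      using 3 diff dest src branch2 by linarith
  qed
qed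

lemma Cbar_minus_RQMF_le_gapstar:
  assumes "N \<ge> 2" "\<Delta> > 0"
  shows "Cbar N h g - RQMF N h g \<Delta> \<le> gapstar \<Delta> N"
  unfolding Cbar_eq_Min_cutset_value RQMF_eq_Min_qmf_value
proof (rule Min_image_diff_le)
  fix \<Omega> assume "\<Omega> \<in> Pow {1..N}"
  then show "cutset_value N h g \<Omega> - pos_part (qmf_value N h g \<Delta> \<Omega>) \<le> gapstar \<Delta> N"
    using cutset_value_minus_qmf_value_le_gapstar[OF assms, of \<Omega> h g]
    by (auto simp: pos_part_def)
qed auto

text \<open>Equivalently, \<open>(1 + \<Delta>) ^ (m + 1) / \<Delta> ^ m\<close> is minimal at \<open>\<Delta> = m\<close>; the proof is concavity
  of \<open>log\<close> at the points \<open>\<Delta> / m\<close> and \<open>1\<close> with weights \<open>m / (m + 1)\<close> and \<open>1 / (m + 1)\<close>.\<close>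

lemma log_tradeoff_min:
  fixes b m \<Delta> :: real
  assumes b: "b > 1" and m: "m > 0" and \<Delta>: "\<Delta> > 0"
  shows "(m + 1) * log b (1 + m) - m * log b m \<le> (m + 1) * log b (1 + \<Delta>) - m * log b \<Delta>"
proof -
  have "(1 - 1 / (m + 1)) * log b (\<Delta> / m) + (1 / (m + 1)) * log b 1
      \<le> log b ((1 - 1 / (m + 1)) *\<^sub>R (\<Delta> / m) + (1 / (m + 1)) *\<^sub>R 1)"
    by (rule concave_onD[OF log_concave[OF b]]) (use m \<Delta> in auto)
  also have "(1 - 1 / (m + 1)) *\<^sub>R (\<Delta> / m) + (1 / (m + 1)) *\<^sub>R 1 = (1 + \<Delta>) / (m + 1)"
    using m by (simp add: field_simps)
  finally have "m * log b (\<Delta> / m) \<le> (m + 1) * log b ((1 + \<Delta>) / (1 + m))"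
    using m by (simp add: field_simps)
  moreover have "log b (\<Delta> / m) = log b \<Delta> - log b m"
    and "log b ((1 + \<Delta>) / (1 + m)) = log b (1 + \<Delta>) - log b (1 + m)"
    using m \<Delta> by (simp_all add: log_divide add_pos_pos)
  ultimately show ?thesis
    by (simp only: right_diff_distrib)
qed

lemma gapstar_at_N_minus_1:
  assumes N: "N \<ge> 3"
  shows "gapstar (real N - 1) N = real N * log 2 (real N / (real N - 1)) + 2 * log 2 (real N - 1)"
proof -
  define m where "m = real N - 1"
  define L where "L = log 2 (real N / m)"
  have m: "m \<ge> 2" and Nm: "real N = m + 1"
    using N by (simp_all add: m_def)
  have L: "L = log 2 (real N) - log 2 m" and NL: "real N * L = m * L + L"
    using m by (simp_all add: L_def Nm log_divide distrib_right)
  have "2 * m \<le> m * m"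
    using m by (intro mult_right_mono) auto
  then have "m + 1 \<le> m * m"
    using m by linarith
  then have "log 2 (real N) \<le> log 2 (m * m)"
    using m by (simp add: Nm)
  also have "\<dots> = 2 * log 2 m"
    using m by (simp add: log_mult)
  finally have "log 2 (real N) + real N * L \<le> log 2 m + m * L + log 2 (real N)"
    using L NL by linarith
  then have "gapstar m N = log 2 m + m * L + log 2 (real N)"
    unfolding gapstar_def by (simp add: m_def L_def)
  also have "\<dots> = real N * L + 2 * log 2 m"
    using L NL by linarith
  finally show ?thesis
    by (simp add: m_def L_def)
qed

lemma gapstar_min_at_N_minus_1:
  assumes N: "N \<ge> 3" and \<Delta>: "\<Delta> > 0"
  shows "gapstar (real N - 1) N \<le> gapstar \<Delta> N"
proof -
  define m where "m = real N - 1"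
  have m: "m \<ge> 2" and Nm: "real N = m + 1"
    using N by (simp_all add: m_def)
  have "real N * log 2 (real N / m) = (m + 1) * log 2 (1 + m) - m * log 2 m - log 2 m"
    using m by (simp add: Nm log_divide right_diff_distrib distrib_right add.commute)
  then have "gapstar m N = log 2 m + ((m + 1) * log 2 (1 + m) - m * log 2 m)"
    using gapstar_at_N_minus_1[OF N] by (simp add: m_def)
  also have "\<dots> \<le> log 2 m + ((m + 1) * log 2 (1 + \<Delta>) - m * log 2 \<Delta>)"
    using log_tradeoff_min[of 2 m \<Delta>] m \<Delta> by simp
  also have "\<dots> = log 2 m + m * log 2 ((1 + \<Delta>) / \<Delta>) + log 2 (1 + \<Delta>)"
    using \<Delta> by (simp add: log_divide right_diff_distrib distrib_right add_pos_pos)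
  also have "\<dots> \<le> gapstar \<Delta> N"
    by (simp add: gapstar_def m_def)
  finally show ?thesis
    by (simp add: m_def)
qed

lemma log2_three_halves: "log 2 (3 / 2) = log 2 3 - 1"
  by (simp add: log_divide)

lemma gapstar_2_at_2: "gapstar 2 2 = 2 * log 2 3 - 1"
  by (simp add: gapstar_def log2_three_halves)

lemma gapstar_2_min_at_2:
  assumes \<Delta>: "\<Delta> > 0"
  shows "gapstar 2 2 \<le> gapstar \<Delta> 2"
proof (cases "\<Delta> \<le> 2")
  case True
  then have "3 / 2 \<le> (1 + \<Delta>) / \<Delta>"
    using \<Delta> by (simp add: field_simps)
  then have "log 2 (3 / 2) \<le> log 2 ((1 + \<Delta>) / \<Delta>)"
    using \<Delta> by simp
  then show ?thesis
    by (simp add: gapstar_2_at_2 gapstar_def log2_three_halves)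
next
  case False
  have "(2 * \<Delta> - 1) * (\<Delta> - 2) \<ge> 0"
    using False by simp
  then have "9 / 2 \<le> (1 + \<Delta>)^2 / \<Delta>"
    using \<Delta> by (simp add: pos_le_divide_eq power2_eq_square algebra_simps)
  then have "log 2 (9 / 2) \<le> log 2 ((1 + \<Delta>)^2 / \<Delta>)"
    using \<Delta> by simp
  moreover have "log 2 (9 / 2) = 2 * log 2 3 - 1"
    using log_nat_power[of 3 2 2] by (simp add: log_divide)
  moreover have "log 2 ((1 + \<Delta>)^2 / \<Delta>) = log 2 ((1 + \<Delta>) / \<Delta>) + log 2 (1 + \<Delta>)"
    using \<Delta> by (simp add: log_divide log_nat_power)
  ultimately show ?thesis
    by (simp add: gapstar_2_at_2 gapstar_def log2_three_halves)
qed

lemma Delta_opt_pos: "N \<ge> 2 \<Longrightarrow> Delta_opt N > 0"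
  by (simp add: Delta_opt_def)

lemma gapstar_Delta_opt:
  assumes "N \<ge> 2"
  shows "gapstar (Delta_opt N) N = gapstar_opt N"
  using assms gapstar_2_at_2 gapstar_at_N_minus_1[of N]
  by (cases "N = 2") (simp_all add: Delta_opt_def gapstar_opt_def)

lemma gapstar_Delta_opt_le:
  assumes "N \<ge> 2" "\<Delta> > 0"
  shows "gapstar (Delta_opt N) N \<le> gapstar \<Delta> N"
  using assms gapstar_2_min_at_2 gapstar_min_at_N_minus_1[of N \<Delta>]
  by (cases "N = 2") (simp_all add: Delta_opt_def)

lemma gapstar_opt_Theta_ln: "(\<lambda>n. gapstar_opt n) \<in> \<Theta>(\<lambda>n. ln (real n))"
proof -
  define f where "f n = real n * (ln (real n / (real n - 1)) / ln 2) + 2 * (ln (real n - 1) / ln 2)"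
    for n :: nat
  have "eventually (\<lambda>n. gapstar_opt n = f n) at_top"
    using eventually_ge_at_top[of 3] by eventually_elim (auto simp: gapstar_opt_def f_def log_def)
  moreover have "f \<in> \<Theta>(\<lambda>n. ln (real n))"
    unfolding f_def by real_asymp
  ultimately show ?thesis
    using landau_theta.in_cong by auto
qed

theorem mainTheorem7:
  fixes N :: nat
  assumes "N \<ge> 2"
  shows "(\<forall>\<Delta>>0. \<forall>h g :: nat \<Rightarrow> real.
            (\<forall>i\<in>{1..N}. h i \<ge> 0 \<and> g i \<ge> 0) \<longrightarrow>
            Cbar N h g - RQMF N h g \<Delta> \<le> gapstar \<Delta> N)
       \<and> Delta_opt N > 0
       \<and> (\<forall>\<Delta>>0. gapstar (Delta_opt N) N \<le> gapstar \<Delta> N)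
       \<and> gapstar (Delta_opt N) N = gapstar_opt N
       \<and> (\<forall>h g :: nat \<Rightarrow> real.
            (\<forall>i\<in>{1..N}. h i \<ge> 0 \<and> g i \<ge> 0) \<longrightarrow>
            Cbar N h g - RQMF N h g (Delta_opt N) \<le> gapstar_opt N)
       \<and> (\<lambda>n. gapstar_opt n) \<in> \<Theta>(\<lambda>n. ln (real n))"
proof -
  have Delta_opt: "Delta_opt N > 0"
    using Delta_opt_pos[OF assms] .
  have "Cbar N h g - RQMF N h g (Delta_opt N) \<le> gapstar_opt N" for h g
    using Cbar_minus_RQMF_le_gapstar[OF assms Delta_opt] gapstar_Delta_opt[OF assms] by simp
  then show ?thesis
    using Cbar_minus_RQMF_le_gapstar[OF assms] Delta_opt gapstar_Delta_opt_le[OF assms]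
      gapstar_Delta_opt[OF assms] gapstar_opt_Theta_ln
    by simp
qed

end
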